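(* Let $\Omega$ be an $n\times n$ matrix-valued measure on $\mathbb{R}$ such that $\int_{\mathbb{R}}\frac{d\Omega(y)}{1+y^{2}}\in\mathbb{C}^{n\times n}$. For $x\in\mathbb{R}$ let $T(x):=\int_{\mathbb{R}}\frac{d\Omega(y)}{(x-y)^{2}}$. Then the set $$\{x\in\operatorname{supp}\Omega : T(x)\notin\mathbb{C}^{n\times n}\}$$ is a dense $G_{\delta}$ subset of $\operatorname{supp}\Omega$ (with the relative topology).
   Context: A matrix-valued measure is a map $\Omega$ from the Borel sets of $\mathbb{R}$ to $\mathbb{C}^{n\times n}$ such that $\Omega(X)$ is positive semidefinite for each bounded Borel $X$, $\Omega(\varnothing)=0$, and $\Omega$ is countably additive on disjoint families with bounded union; $\operatorname{supp}\Omega$ is its (closed) support, i.e. the support of the trace measure $\operatorname{Tr}\Omega=\sum_i\langle e_i,\Omega(\cdot)e_i\rangle$. For a Borel function $f$, $\int_{\mathbb{R}}f\,d\Omega$ denotes the matrix associated with the sesquilinear form $(a,b)\mapsto\int_{\mathbb{R}}f(y)\,d\langle a,\Omega(y)b\rangle_{\mathbb{C}^n}$; $\int f\,d\Omega\in\mathbb{C}^{n\times n}$ means this form is defined (finite) for all $a,b\in\mathbb{C}^n$. Thus $T(x)\in\mathbb{C}^{n\times n}$ iff $\int\frac{1}{(x-y)^2}d\langle c,\Omega(y)c\rangle<\infty$ for all $c\in\mathbb{C}^n$. *)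

theory Defs
  imports "HOL-Analysis.Analysis"
begin

definition hform :: "complex^'n^'n \<Rightarrow> complex^'n \<Rightarrow> complex^'n \<Rightarrow> complex" where
  "hform M a b = (\<Sum>i\<in>UNIV. cnj (a $ i) * ((M *v b) $ i))"

definition psd_cmat :: "complex^'n^'n \<Rightarrow> bool" where
  "psd_cmat M \<longleftrightarrow> (\<forall>v. hform M v v \<in> \<real> \<and> 0 \<le> Re (hform M v v))"

text \<open>A matrix-valued measure: defined on bounded Borel sets (values on other sets are
  irrelevant), positive semidefinite, vanishing on the empty set, countably additive on
  disjoint families of Borel sets with bounded union.\<close>
definition matrix_measure :: "(real set \<Rightarrow> complex^'n^'n) \<Rightarrow> bool" where
  "matrix_measure \<Omega> \<longleftrightarrow>
     (\<forall>X \<in> sets borel. bounded X \<longrightarrow> psd_cmat (\<Omega> X)) \<and>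
     \<Omega> {} = 0 \<and>
     (\<forall>A :: nat \<Rightarrow> real set. range A \<subseteq> sets borel \<longrightarrow> disjoint_family A \<longrightarrow>
        bounded (\<Union>i. A i) \<longrightarrow> (\<lambda>m. \<Sum>i<m. \<Omega> (A i)) \<longlonglongrightarrow> \<Omega> (\<Union>i. A i))"

text \<open>The (locally finite, positive) scalar measure  X \<mapsto> <c, \<Omega>(X) c>  extended to all
  Borel sets by inner regularity along the exhaustion [-k,k].\<close>
definition qmeas :: "(real set \<Rightarrow> complex^'n^'n) \<Rightarrow> complex^'n \<Rightarrow> real measure" where
  "qmeas \<Omega> c = measure_of UNIV (sets borel)
     (\<lambda>X. SUP k::nat. ennreal (Re (hform (\<Omega> (X \<inter> {- real k .. real k})) c c)))"

definition mm_supp :: "(real set \<Rightarrow> complex^'n^'n) \<Rightarrow> real set" where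
  "mm_supp \<Omega> = {x. \<forall>e>0. trace (\<Omega> (ball x e)) \<noteq> 0}"

text \<open>\<open>\<integral> f d\<Omega> \<in> C^{n\<times>n}\<close> for nonnegative f: the form is finite on the diagonal, i.e.
  \<open>\<integral> f d<c,\<Omega> c> < \<infinity>\<close> for all c.\<close>
definition mm_integral_finite :: "(real set \<Rightarrow> complex^'n^'n) \<Rightarrow> (real \<Rightarrow> ennreal) \<Rightarrow> bool" where
  "mm_integral_finite \<Omega> f \<longleftrightarrow> (\<forall>c. (\<integral>\<^sup>+ y. f y \<partial>qmeas \<Omega> c) < \<infinity>)"

definition Tkernel :: "real \<Rightarrow> real \<Rightarrow> ennreal" where
  "Tkernel x y = (if y = x then \<infinity> else ennreal (1 / (x - y)^2))"

end

theory Submission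
  imports Defs
begin

text \<open>
  Testing the quadratic form of \<open>\<Omega>\<close> against the coordinate vectors \<open>e\<^sub>i\<close> reduces everything
  to the finitely many scalar measures \<open>\<mu>\<^sub>i = \<langle>e\<^sub>i, \<Omega> e\<^sub>i\<rangle>\<close>: a general \<open>\<langle>c, \<Omega> c\<rangle>\<close> is
  dominated by a multiple of their sum (parallelogram law), and the trace of \<open>\<Omega>(X)\<close> vanishes
  iff all \<open>\<mu>\<^sub>i(X)\<close> do. By Fatou's lemma each \<open>x \<mapsto> \<integral> d\<mu>\<^sub>i(y) / (x - y)\<^sup>2\<close> is lower
  semicontinuous, so the points where one of them is infinite form a \<open>G\<^sub>\<delta>\<close> set.

  For density, let a scalar measure \<open>\<mu>\<close> charge \<open>[a, b]\<close>. If every point of \<open>[a, b]\<close> were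
  either outside \<open>supp \<mu>\<close> or had \<open>\<integral> d\<mu>(y) / (x - y)\<^sup>2 = C < \<infinity>\<close>, then
  \<open>\<mu>(I) \<le> C |I|\<^sup>2\<close> for all short intervals \<open>I\<close> around it, and Bolzano's bisection principle
  would glue these local bounds into \<open>\<mu>[a, b] \<le> \<epsilon> (b - a)\<close> for every \<open>\<epsilon> > 0\<close>.
\<close>

lemma hform_eq_double_sum: "hform M a b = (\<Sum>i\<in>UNIV. \<Sum>j\<in>UNIV. cnj (a$i) * M$i$j * b$j)"
  by (simp add: hform_def matrix_vector_mult_def sum_distrib_left mult.assoc)

lemma hform_add_left: "hform M (a + b) c = hform M a c + hform M b c"
  by (simp add: hform_def distrib_right sum.distrib)

lemma hform_add_right: "hform M a (b + c) = hform M a b + hform M a c"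
  by (simp add: hform_def matrix_vector_right_distrib distrib_left sum.distrib)

lemma hform_diff_left: "hform M (a - b) c = hform M a c - hform M b c"
  by (simp add: hform_def left_diff_distrib sum_subtractf)

lemma hform_diff_right: "hform M a (b - c) = hform M a b - hform M a c"
  by (simp add: hform_def matrix_vector_mult_diff_distrib right_diff_distrib sum_subtractf)

lemma hform_scale_both: "hform M (k *s a) (k *s a) = of_real ((cmod k)\<^sup>2) * hform M a a"
proof -
  have "hform M (k *s a) (k *s a) = (cnj k * k) * hform M a a"
    by (simp add: hform_eq_double_sum sum_distrib_left mult_ac)
  then show ?thesis
    by (metis complex_norm_square mult.commute of_real_power)
qed

lemma hform_add_matrix: "hform (M + N) a b = hform M a b + hform N a b"
  by (simp add: hform_eq_double_sum distrib_left distrib_right sum.distrib)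

lemma hform_sum_matrix: "hform (\<Sum>i\<in>F. M i) a b = (\<Sum>i\<in>F. hform (M i) a b)"
  by (induction F rule: infinite_finite_induct) (auto simp: hform_add_matrix hform_def[of 0])

lemma tendsto_hform:
  "(f \<longlongrightarrow> L) F \<Longrightarrow> ((\<lambda>x. hform (f x) a b) \<longlongrightarrow> hform L a b) F"
  unfolding hform_eq_double_sum by (intro tendsto_intros)

lemma hform_axis_axis: "hform M (axis i 1) (axis i 1) = M $ i $ i"
proof -
  have "(M *v axis i 1) $ k = M $ k $ i" for k
    by (simp add: matrix_vector_mult_def axis_def if_distrib cong: if_cong)
  then have "hform M (axis i 1) (axis i 1) = (\<Sum>k\<in>UNIV. if k = i then M $ k $ i else 0)"
    unfolding hform_def by (intro sum.cong) (auto simp: axis_def)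
  then show ?thesis
    by simp
qed

definition qform :: "complex^'n^'n \<Rightarrow> complex^'n \<Rightarrow> real" where
  "qform M c = Re (hform M c c)"

lemma qform_zero_matrix [simp]: "qform 0 c = 0"
  by (simp add: qform_def hform_def)

lemma qform_add_matrix: "qform (M + N) c = qform M c + qform N c"
  by (simp add: qform_def hform_add_matrix)

lemma qform_parallelogram: "qform M (a + b) + qform M (a - b) = 2 * qform M a + 2 * qform M b"
  by (simp add: qform_def hform_add_left hform_add_right hform_diff_left hform_diff_right)

lemma psd_qform_nonneg: "psd_cmat M \<Longrightarrow> 0 \<le> qform M c"
  by (simp add: psd_cmat_def qform_def)

lemma psd_qform_add_le: "psd_cmat M \<Longrightarrow> qform M (a + b) \<le> 2 * qform M a + 2 * qform M b"
  using qform_parallelogram[of M a b] psd_qform_nonneg[of M "a - b"] by linarith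

lemma psd_qform_sum_le:
  assumes "psd_cmat M" "finite F"
  shows "qform M (\<Sum>i\<in>F. v i) \<le> 2 ^ card F * (\<Sum>i\<in>F. qform M (v i))"
  using assms(2)
proof (induction F rule: finite_induct)
  case empty
  then show ?case by (simp add: qform_def hform_def)
next
  case (insert x F)
  have "qform M (\<Sum>i\<in>insert x F. v i) \<le> 2 * qform M (v x) + 2 * qform M (\<Sum>i\<in>F. v i)"
    using psd_qform_add_le[OF assms(1)] insert.hyps by simp
  also have "\<dots> \<le> 2 * 2 ^ card F * qform M (v x) + 2 * (2 ^ card F * (\<Sum>i\<in>F. qform M (v i)))"
    using insert.IH psd_qform_nonneg[OF assms(1), of "v x"] by (intro add_mono) (auto simp: mult_le_cancel_right1)
  finally show ?case
    using insert.hyps by (simp add: algebra_simps)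
qed

lemma psd_qform_le_diagonal:
  fixes M :: "complex^'n^'n"
  assumes "psd_cmat M"
  shows "qform M c \<le> 2 ^ CARD('n) * (norm c)\<^sup>2 * (\<Sum>i\<in>UNIV. qform M (axis i 1))"
proof -
  have "qform M c \<le> 2 ^ CARD('n) * (\<Sum>i\<in>UNIV. qform M ((c$i) *s axis i 1))"
    using psd_qform_sum_le[OF assms, of UNIV "\<lambda>i. (c$i) *s axis i 1"] by (simp add: basis_expansion)
  also have "(\<Sum>i\<in>UNIV. qform M ((c$i) *s axis i 1)) = (\<Sum>i\<in>UNIV. (cmod (c$i))\<^sup>2 * qform M (axis i 1))"
    by (simp add: qform_def hform_scale_both)
  also have "\<dots> \<le> (\<Sum>i\<in>UNIV. (norm c)\<^sup>2 * qform M (axis i 1))"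
    by (intro sum_mono mult_right_mono psd_qform_nonneg[OF assms] power_mono) (auto simp: Finite_Cartesian_Product.norm_nth_le)
  finally show ?thesis
    by (simp add: sum_distrib_left mult.assoc)
qed

lemma psd_trace_eq_sum_qform:
  assumes "psd_cmat M"
  shows "trace M = of_real (\<Sum>i\<in>UNIV. qform M (axis i 1))"
proof -
  have "M $ i $ i = of_real (qform M (axis i 1))" for i
    using assms unfolding psd_cmat_def qform_def
    by (metis Reals_cases Re_complex_of_real hform_axis_axis)
  then show ?thesis
    by (simp add: trace_def)
qed

lemma nn_integral_le_sum_nn_integral:
  fixes N :: "'i \<Rightarrow> 'a measure"
  assumes sets_N: "\<And>i. sets (N i) = sets M"
    and emeasure_le: "\<And>A. A \<in> sets M \<Longrightarrow> emeasure M A \<le> K * (\<Sum>i\<in>I. emeasure (N i) A)"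
    and f: "f \<in> borel_measurable M"
  shows "(\<integral>\<^sup>+x. f x \<partial>M) \<le> K * (\<Sum>i\<in>I. \<integral>\<^sup>+x. f x \<partial>N i)"
  using f
proof (induction rule: borel_measurable_induct)
  case (cong f g)
  have "integral\<^sup>N (N i) f = integral\<^sup>N (N i) g" for i
    using cong.hyps by (intro nn_integral_cong) (simp add: sets_eq_imp_space_eq[OF sets_N])
  moreover have "integral\<^sup>N M f = integral\<^sup>N M g"
    using cong.hyps by (intro nn_integral_cong) simp
  ultimately show ?case
    using cong.IH by simp
next
  case (set A)
  then show ?case
    using emeasure_le sets_N by simp
next
  case (mult u c)
  have [measurable]: "u \<in> borel_measurable (N i)" for i
    using mult.hyps measurable_cong_sets[OF sets_N refl] by blast
  have "(\<integral>\<^sup>+x. c * u x \<partial>M) \<le> c * (K * (\<Sum>i\<in>I. \<integral>\<^sup>+x. u x \<partial>N i))"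
    using mult by (simp add: nn_integral_cmult mult_left_mono)
  then show ?case
    by (simp add: nn_integral_cmult sum_distrib_left mult_ac)
next
  case (add u v)
  have [measurable]: "u \<in> borel_measurable (N i)" "v \<in> borel_measurable (N i)" for i
    using add.hyps measurable_cong_sets[OF sets_N refl] by blast+
  have "(\<integral>\<^sup>+x. v x + u x \<partial>M) \<le> K * (\<Sum>i\<in>I. \<integral>\<^sup>+x. v x \<partial>N i) + K * (\<Sum>i\<in>I. \<integral>\<^sup>+x. u x \<partial>N i)"
    using add by (simp add: nn_integral_add add_mono)
  then show ?case
    by (simp add: nn_integral_add distrib_left sum.distrib)
next
  case (seq U)
  have [measurable]: "U j \<in> borel_measurable (N i)" for i j
    using seq.hyps measurable_cong_sets[OF sets_N refl] by blast
  have "(\<integral>\<^sup>+x. U j x \<partial>M) \<le> K * (\<Sum>i\<in>I. \<integral>\<^sup>+x. (SUP j. U j) x \<partial>N i)" for j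
  proof -
    have "(\<integral>\<^sup>+x. U j x \<partial>M) \<le> K * (\<Sum>i\<in>I. \<integral>\<^sup>+x. U j x \<partial>N i)"
      using seq.IH by simp
    also have "\<dots> \<le> K * (\<Sum>i\<in>I. \<integral>\<^sup>+x. (SUP j. U j) x \<partial>N i)"
      by (intro mult_left_mono sum_mono nn_integral_mono) (auto intro: SUP_upper)
    finally show ?thesis .
  qed
  moreover have "(\<integral>\<^sup>+x. (SUP j. U j) x \<partial>M) = (SUP j. \<integral>\<^sup>+x. U j x \<partial>M)"
    unfolding SUP_apply using seq.hyps by (intro nn_integral_monotone_convergence_SUP) auto
  ultimately show ?case
    by (simp add: SUP_least)
qed

lemma Tkernel_eq_inverse: "Tkernel x y = inverse (ennreal ((x - y)\<^sup>2))"
  by (simp add: Tkernel_def inverse_ennreal divide_inverse)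

lemma continuous_on_Tkernel_left: "continuous_on UNIV (\<lambda>x. Tkernel x y)"
  unfolding Tkernel_eq_inverse by (intro continuous_intros continuous_on_ennreal)

lemma continuous_on_Tkernel_right: "continuous_on UNIV (Tkernel x)"
  unfolding Tkernel_eq_inverse by (intro continuous_intros continuous_on_ennreal)

lemma borel_measurable_Tkernel[measurable]: "Tkernel x \<in> borel_measurable borel"
  by (rule borel_measurable_continuous_onI[OF continuous_on_Tkernel_right])

lemma open_nn_integral_gt:
  fixes f :: "'a::first_countable_topology \<Rightarrow> 'b \<Rightarrow> ennreal"
  assumes [measurable]: "\<And>x. f x \<in> borel_measurable M"
    and cont: "\<And>y. continuous_on UNIV (\<lambda>x. f x y)"
  shows "open {x. m < (\<integral>\<^sup>+y. f x y \<partial>M)}"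
proof -
  have "closed {x. (\<integral>\<^sup>+y. f x y \<partial>M) \<le> m}"
    unfolding closed_sequential_limits
  proof (intro allI impI, elim conjE)
    fix X l
    assume X: "\<forall>n. X n \<in> {x. (\<integral>\<^sup>+y. f x y \<partial>M) \<le> m}" and l: "X \<longlonglongrightarrow> l"
    have "liminf (\<lambda>n. f (X n) y) = f l y" for y
      by (intro lim_imp_Liminf continuous_on_tendsto_compose[OF cont l]) auto
    then have "(\<integral>\<^sup>+y. f l y \<partial>M) = (\<integral>\<^sup>+y. liminf (\<lambda>n. f (X n) y) \<partial>M)"
      by simp
    also have "\<dots> \<le> liminf (\<lambda>n. \<integral>\<^sup>+y. f (X n) y \<partial>M)"
      by (rule nn_integral_liminf) simp
    also have "\<dots> \<le> m"
      using X by (intro Liminf_le) auto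
    finally show "l \<in> {x. (\<integral>\<^sup>+y. f x y \<partial>M) \<le> m}"
      by simp
  qed
  then show ?thesis
    by (simp add: closed_def Compl_eq not_le)
qed

lemma gdelta_in_ex_eq_infinity:
  fixes F :: "'i::finite \<Rightarrow> 'a::topological_space \<Rightarrow> ennreal"
  assumes "\<And>i m. open {x. m < F i x}"
  shows "gdelta_in euclidean {x. \<exists>i. F i x = \<infinity>}"
proof -
  have "{x. \<exists>i. F i x = \<infinity>} = (\<Inter>m::nat. \<Union>i. {x. of_nat m < F i x})"
  proof (intro equalityI subsetI)
    fix x
    assume x: "x \<in> (\<Inter>m::nat. \<Union>i. {x. of_nat m < F i x})"
    show "x \<in> {x. \<exists>i. F i x = \<infinity>}"
    proof (rule ccontr)
      assume "x \<notin> {x. \<exists>i. F i x = \<infinity>}"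
      then have "(\<Sum>i\<in>UNIV. F i x) < top"
        by (simp add: less_top[symmetric])
      then obtain m :: nat where m: "(\<Sum>i\<in>UNIV. F i x) < of_nat m"
        using ennreal_Ex_less_of_nat by blast
      obtain i where "of_nat m < F i x"
        using x by blast
      moreover have "F i x \<le> (\<Sum>i\<in>UNIV. F i x)"
        by (rule member_le_sum) auto
      ultimately show False
        using m by simp
    qed
  next
    fix x
    assume "x \<in> {x. \<exists>i. F i x = \<infinity>}"
    then obtain i where "F i x = \<infinity>"
      by blast
    then have "of_nat m < F i x" for m :: nat
      by (simp add: of_nat_less_top)
    then show "x \<in> (\<Inter>m::nat. \<Union>i. {x. of_nat m < F i x})"
      by blast
  qed
  also have "gdelta_in euclidean \<dots>"
    using assms by (intro gdelta_in_Inter open_imp_gdelta_in) (auto intro: open_UN)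
  finally show ?thesis .
qed

lemma emeasure_interval_le_nn_integral_Tkernel:
  fixes M :: "real measure"
  assumes sets_M [measurable_cong]: "sets M = sets borel"
    and finite: "(\<integral>\<^sup>+t. Tkernel x t \<partial>M) < \<infinity>" and "a \<le> x" "x \<le> b"
  shows "emeasure M {a..b} \<le> ennreal ((b - a)\<^sup>2) * (\<integral>\<^sup>+t. Tkernel x t \<partial>M)"
proof -
  have "\<infinity> * emeasure M {x} = (\<integral>\<^sup>+t. \<infinity> * indicator {x} t \<partial>M)"
    by (simp add: nn_integral_cmult_indicator)
  also have "\<dots> \<le> (\<integral>\<^sup>+t. Tkernel x t \<partial>M)"
    by (intro nn_integral_mono) (simp add: Tkernel_def split: split_indicator)
  finally have "emeasure M {x} = 0"
    using finite by (auto simp: ennreal_top_mult split: if_splits)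
  then have "emeasure M {a..b} = emeasure M ({a..b} - {x})"
    by (simp add: emeasure_Diff_null_set null_setsI)
  also have "\<dots> = (\<integral>\<^sup>+t. indicator ({a..b} - {x}) t \<partial>M)"
    by simp
  also have "\<dots> \<le> (\<integral>\<^sup>+t. ennreal ((b - a)\<^sup>2) * Tkernel x t \<partial>M)"
  proof (intro nn_integral_mono)
    fix t
    show "indicator ({a..b} - {x}) t \<le> ennreal ((b - a)\<^sup>2) * Tkernel x t"
    proof (cases "t \<in> {a..b} - {x}")
      case True
      then have "\<bar>x - t\<bar> \<le> b - a" "t \<noteq> x"
        using \<open>a \<le> x\<close> \<open>x \<le> b\<close> by auto
      then have "(x - t)\<^sup>2 \<le> (b - a)\<^sup>2" "0 < (x - t)\<^sup>2"
        by (simp_all add: power2_le_iff_abs_le)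
      then have "1 \<le> (b - a)\<^sup>2 * (1 / (x - t)\<^sup>2)"
        by (simp add: field_simps)
      then have "1 \<le> ennreal ((b - a)\<^sup>2) * ennreal (1 / (x - t)\<^sup>2)"
        by (simp add: ennreal_mult'[symmetric])
      then show ?thesis
        using True by (simp add: Tkernel_def)
    qed simp
  qed
  also have "\<dots> = ennreal ((b - a)\<^sup>2) * (\<integral>\<^sup>+t. Tkernel x t \<partial>M)"
    by (simp add: nn_integral_cmult)
  finally show ?thesis .
qed

lemma measure_interval_le_linear:
  fixes M :: "real measure"
  assumes sets_M [measurable_cong]: "sets M = sets borel"
    and finite: "\<And>a b. emeasure M {a..b} < \<infinity>" and "a \<le> b" and "0 < \<epsilon>"
    and null_or_finite: "\<And>x. a \<le> x \<Longrightarrow> x \<le> b \<Longrightarrow>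
      (\<exists>r>0. emeasure M (ball x r) = 0) \<or> (\<integral>\<^sup>+t. Tkernel x t \<partial>M) < \<infinity>"
  shows "measure M {a..b} \<le> \<epsilon> * (b - a)"
  using \<open>a \<le> b\<close>
proof (induction rule: Bolzano)
  case (trans a b c)
  have "{a..c} = {a..b} \<union> {b..c}"
    using trans.hyps by auto
  then have "measure M {a..c} \<le> measure M {a..b} + measure M {b..c}"
    by (simp add: measure_Un_le)
  then show ?case
    using trans.IH by (simp add: algebra_simps)
next
  case (local x)
  from null_or_finite[OF local] consider r where "r > 0" "emeasure M (ball x r) = 0"
    | "(\<integral>\<^sup>+t. Tkernel x t \<partial>M) < \<infinity>"
    by blast
  then show ?case
  proof cases
    case (1 r)
    have "measure M {c..d} = 0" if "c \<le> x" "x \<le> d" "d - c < r" for c d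
    proof -
      have "{c..d} \<subseteq> ball x r"
        using that by (auto simp: dist_real_def)
      then have "emeasure M {c..d} = 0"
        using emeasure_mono[of "{c..d}" "ball x r" M] 1 by simp
      then show ?thesis
        by (simp add: measure_def)
    qed
    then show ?thesis
      using 1 \<open>0 < \<epsilon>\<close> by (intro exI[of _ r]) auto
  next
    case 2
    define C where "C = enn2real (\<integral>\<^sup>+t. Tkernel x t \<partial>M)"
    have C: "(\<integral>\<^sup>+t. Tkernel x t \<partial>M) = ennreal C" "0 \<le> C"
      using 2 by (auto simp: C_def less_top ennreal_enn2real)
    have "measure M {c..d} \<le> \<epsilon> * (d - c)" if "c \<le> x" "x \<le> d" "d - c < \<epsilon> / (C + 1)" for c d
    proof -
      have "emeasure M {c..d} \<le> ennreal ((d - c)\<^sup>2 * C)"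
        using emeasure_interval_le_nn_integral_Tkernel[OF sets_M 2 that(1,2)] C
        by (simp add: ennreal_mult)
      then have "measure M {c..d} \<le> (d - c) * ((d - c) * C)"
        using finite[of c d] that C by (simp add: measure_def enn2real_leI power2_eq_square mult.assoc)
      also have "\<dots> \<le> (d - c) * \<epsilon>"
      proof (intro mult_left_mono)
        have "(d - c) * C \<le> (d - c) * (C + 1)"
          using that by (intro mult_left_mono) auto
        also have "\<dots> < \<epsilon>"
          using that C by (simp add: field_simps)
        finally show "(d - c) * C \<le> \<epsilon>"
          by simp
      qed (use that in auto)
      finally show ?thesis
        by (simp add: mult.commute)
    qed
    then show ?thesis
      using \<open>0 < \<epsilon>\<close> C by (intro exI[of _ "\<epsilon> / (C + 1)"]) auto
  qed
qed

lemma exists_nn_integral_Tkernel_eq_infinity: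
  fixes M :: "real measure"
  assumes sets_M: "sets M = sets borel" and finite: "\<And>a b. emeasure M {a..b} < \<infinity>"
    and "a \<le> b" and positive: "0 < emeasure M {a..b}"
  shows "\<exists>y\<in>{a..b}. (\<forall>r>0. 0 < emeasure M (ball y r)) \<and> (\<integral>\<^sup>+t. Tkernel y t \<partial>M) = \<infinity>"
proof (rule ccontr)
  assume "\<not> ?thesis"
  then have null_or_finite:
    "(\<exists>r>0. emeasure M (ball x r) = 0) \<or> (\<integral>\<^sup>+t. Tkernel x t \<partial>M) < \<infinity>"
    if "a \<le> x" "x \<le> b" for x
    using that by (auto simp: less_top)
  define m where "m = measure M {a..b}"
  have "0 < m"
    using positive finite[of a b] by (simp add: m_def emeasure_eq_ennreal_measure)
  then have "0 < m / (b - a + 1)"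
    using \<open>a \<le> b\<close> by simp
  then have "m \<le> m / (b - a + 1) * (b - a)"
    unfolding m_def by (rule measure_interval_le_linear[OF sets_M finite \<open>a \<le> b\<close> _ null_or_finite])
  also have "\<dots> < m"
    using \<open>0 < m\<close> \<open>a \<le> b\<close> by (simp add: field_simps)
  finally show False
    by simp
qed

context
  fixes \<Omega> :: "real set \<Rightarrow> complex^'n^'n"
  assumes \<Omega>: "matrix_measure \<Omega>"
begin

lemma matrix_measure_psd: "X \<in> sets borel \<Longrightarrow> bounded X \<Longrightarrow> psd_cmat (\<Omega> X)"
  using \<Omega> by (simp add: matrix_measure_def)

lemma matrix_measure_sums:
  "range A \<subseteq> sets borel \<Longrightarrow> disjoint_family A \<Longrightarrow> bounded (\<Union>i. A i) \<Longrightarrow>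
    (\<lambda>i. \<Omega> (A i)) sums \<Omega> (\<Union>i. A i)"
  using \<Omega> by (simp add: matrix_measure_def sums_def)

lemma matrix_measure_Un:
  assumes "A \<in> sets borel" "B \<in> sets borel" "bounded (A \<union> B)" "A \<inter> B = {}"
  shows "\<Omega> (A \<union> B) = \<Omega> A + \<Omega> B"
proof -
  have "disjoint_family (binaryset A B)"
    using assms(4) by (auto simp: disjoint_family_on_def binaryset_def)
  then have "(\<lambda>i. \<Omega> (binaryset A B i)) sums \<Omega> (A \<union> B)"
    using matrix_measure_sums[of "binaryset A B"] assms
    by (simp add: range_binaryset_eq UN_binaryset_eq)
  moreover have "(\<lambda>i. \<Omega> (binaryset A B i)) sums (\<Omega> A + \<Omega> B)"
    using \<Omega> by (simp add: matrix_measure_def binaryset_sums)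
  ultimately show ?thesis
    by (rule sums_unique2)
qed

lemma qform_matrix_measure_nonneg: "X \<in> sets borel \<Longrightarrow> bounded X \<Longrightarrow> 0 \<le> qform (\<Omega> X) c"
  by (intro psd_qform_nonneg matrix_measure_psd)

lemma qform_matrix_measure_mono:
  assumes "A \<subseteq> B" "A \<in> sets borel" "B \<in> sets borel" "bounded B"
  shows "qform (\<Omega> A) c \<le> qform (\<Omega> B) c"
proof -
  have "\<Omega> B = \<Omega> A + \<Omega> (B - A)"
    using matrix_measure_Un[of A "B - A"] assms by (simp add: Un_absorb1)
  moreover have "0 \<le> qform (\<Omega> (B - A)) c"
    using assms by (intro qform_matrix_measure_nonneg) (auto intro: bounded_subset)
  ultimately show ?thesis
    by (simp add: qform_add_matrix)
qed

lemma qform_matrix_measure_sums_Int: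
  assumes "range A \<subseteq> sets borel" "disjoint_family A" "B \<in> sets borel" "bounded B"
  shows "(\<lambda>i. qform (\<Omega> (A i \<inter> B)) c) sums qform (\<Omega> ((\<Union>i. A i) \<inter> B)) c"
proof -
  have "range (\<lambda>i. A i \<inter> B) \<subseteq> sets borel"
    using assms(1,3) by auto
  moreover have "disjoint_family (\<lambda>i. A i \<inter> B)"
    using assms(2) by (auto simp: disjoint_family_on_def)
  moreover have "bounded (\<Union>i. A i \<inter> B)"
    by (rule bounded_subset[OF assms(4)]) auto
  ultimately have "(\<lambda>i. \<Omega> (A i \<inter> B)) sums \<Omega> (\<Union>i. A i \<inter> B)"
    by (rule matrix_measure_sums)
  from tendsto_Re[OF tendsto_hform[OF this[unfolded sums_def]]]
  have "(\<lambda>i. qform (\<Omega> (A i \<inter> B)) c) sums qform (\<Omega> (\<Union>i. A i \<inter> B)) c"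
    by (simp add: sums_def qform_def hform_sum_matrix)
  moreover have "(\<Union>i. A i \<inter> B) = (\<Union>i. A i) \<inter> B"
    by auto
  ultimately show ?thesis
    by simp
qed

lemma incseq_qform_exhaustion:
  assumes "X \<in> sets borel"
  shows "incseq (\<lambda>k. ennreal (qform (\<Omega> (X \<inter> {- real k..real k})) c))"
  using assms by (intro monoI ennreal_leI qform_matrix_measure_mono) (auto intro: bounded_Int)

lemma countably_additive_qform_exhaustion:
  "countably_additive (sets borel) (\<lambda>X. SUP k::nat. ennreal (qform (\<Omega> (X \<inter> {- real k..real k})) c))"
  unfolding countably_additive_def
proof (intro allI impI)
  fix A :: "nat \<Rightarrow> real set"
  assume A: "range A \<subseteq> sets borel" "disjoint_family A"
  define f where "f k i = ennreal (qform (\<Omega> (A i \<inter> {- real k..real k})) c)" for k i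
  have sum_f: "(\<Sum>i. f k i) = ennreal (qform (\<Omega> ((\<Union>i. A i) \<inter> {- real k..real k})) c)" for k
  proof -
    have sums: "(\<lambda>i. qform (\<Omega> (A i \<inter> {- real k..real k})) c) sums
        qform (\<Omega> ((\<Union>i. A i) \<inter> {- real k..real k})) c"
      by (rule qform_matrix_measure_sums_Int[OF A]) auto
    have "0 \<le> qform (\<Omega> (A i \<inter> {- real k..real k})) c" for i
      using A(1) by (intro qform_matrix_measure_nonneg) (auto simp: bounded_Int)
    then have "(\<Sum>i. f k i) = ennreal (\<Sum>i. qform (\<Omega> (A i \<inter> {- real k..real k})) c)"
      unfolding f_def by (rule suminf_ennreal2[OF _ sums_summable[OF sums]])
    then show ?thesis
      by (simp only: sums_unique[OF sums])
  qed
  have "incseq (\<lambda>k. f k i)" for i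
    unfolding f_def using A(1) by (intro incseq_qform_exhaustion) auto
  then have "(\<Sum>i. SUP k. f k i) = (SUP k. \<Sum>i. f k i)"
    by (rule ennreal_suminf_SUP_eq)
  also have "\<dots> = (SUP k. ennreal (qform (\<Omega> ((\<Union>i. A i) \<inter> {- real k..real k})) c))"
    by (simp only: sum_f)
  finally show "(\<Sum>i. SUP k. ennreal (qform (\<Omega> (A i \<inter> {- real k..real k})) c)) =
      (SUP k. ennreal (qform (\<Omega> ((\<Union>i. A i) \<inter> {- real k..real k})) c))"
    by (simp only: f_def)
qed

lemma emeasure_qmeas:
  assumes "X \<in> sets borel"
  shows "emeasure (qmeas \<Omega> c) X = (SUP k::nat. ennreal (qform (\<Omega> (X \<inter> {- real k..real k})) c))"
proof -
  have qmeas_eq: "qmeas \<Omega> c = measure_of UNIV (sets borel)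
      (\<lambda>X. SUP k::nat. ennreal (qform (\<Omega> (X \<inter> {- real k..real k})) c))"
    by (simp add: qmeas_def qform_def)
  have "\<Omega> {} = 0"
    using \<Omega> by (simp add: matrix_measure_def)
  then have "positive (sets borel) (\<lambda>X. SUP k::nat. ennreal (qform (\<Omega> (X \<inter> {- real k..real k})) c))"
    by (simp add: positive_def)
  then show ?thesis
    unfolding qmeas_eq
    by (rule emeasure_measure_of_sigma[OF sets.sigma_algebra_axioms[of borel, simplified] _
          countably_additive_qform_exhaustion assms])
qed

lemma sets_qmeas [simp, measurable_cong]: "sets (qmeas \<Omega> c) = sets borel"
  by (simp add: qmeas_def sets.sigma_sets_eq[of borel, simplified])

lemma emeasure_qmeas_bounded:
  assumes "X \<in> sets borel" "bounded X"
  shows "emeasure (qmeas \<Omega> c) X = ennreal (qform (\<Omega> X) c)"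
proof -
  obtain r where "\<And>x. x \<in> X \<Longrightarrow> \<bar>x\<bar> \<le> r"
    using assms(2) bounded_real by blast
  moreover obtain k :: nat where "r \<le> real k"
    using real_arch_simple by blast
  ultimately have "X \<inter> {- real k..real k} = X"
    by (force simp: abs_le_iff)
  then have "(SUP j::nat. ennreal (qform (\<Omega> (X \<inter> {- real j..real j})) c)) = ennreal (qform (\<Omega> X) c)"
    using assms
    by (intro antisym SUP_least SUP_upper2[of k]) (auto intro!: ennreal_leI qform_matrix_measure_mono)
  then show ?thesis
    by (simp only: emeasure_qmeas[OF assms(1)])
qed

lemma emeasure_qmeas_le_diagonal:
  assumes "X \<in> sets borel"
  shows "emeasure (qmeas \<Omega> c) X
    \<le> ennreal (2 ^ CARD('n) * (norm c)\<^sup>2) * (\<Sum>i\<in>UNIV. emeasure (qmeas \<Omega> (axis i 1)) X)"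
  unfolding emeasure_qmeas[OF assms]
proof (rule SUP_least)
  fix k :: nat
  define Y where "Y = X \<inter> {- real k..real k}"
  have Y: "Y \<in> sets borel" "bounded Y"
    using assms by (auto simp: Y_def intro: bounded_Int)
  have "ennreal (qform (\<Omega> Y) c)
      \<le> ennreal (2 ^ CARD('n) * (norm c)\<^sup>2 * (\<Sum>i\<in>UNIV. qform (\<Omega> Y) (axis i 1)))"
    using Y by (intro ennreal_leI psd_qform_le_diagonal matrix_measure_psd)
  also have "\<dots> = ennreal (2 ^ CARD('n) * (norm c)\<^sup>2) * ennreal (\<Sum>i\<in>UNIV. qform (\<Omega> Y) (axis i 1))"
    using Y by (intro ennreal_mult) (auto intro: sum_nonneg qform_matrix_measure_nonneg)
  also have "\<dots> = ennreal (2 ^ CARD('n) * (norm c)\<^sup>2) * (\<Sum>i\<in>UNIV. ennreal (qform (\<Omega> Y) (axis i 1)))"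
    by (subst sum_ennreal) (use Y in \<open>auto intro: qform_matrix_measure_nonneg\<close>)
  also have "\<dots> \<le> ennreal (2 ^ CARD('n) * (norm c)\<^sup>2) *
      (\<Sum>i\<in>UNIV. SUP j::nat. ennreal (qform (\<Omega> (X \<inter> {- real j..real j})) (axis i 1)))"
    unfolding Y_def by (intro mult_left_mono sum_mono) (auto intro: SUP_upper)
  finally show "ennreal (qform (\<Omega> (X \<inter> {- real k..real k})) c) \<le> \<dots>"
    by (simp only: Y_def)
qed


lemma nn_integral_qmeas_le_diagonal:
  assumes "f \<in> borel_measurable borel"
  shows "(\<integral>\<^sup>+y. f y \<partial>qmeas \<Omega> c)
    \<le> ennreal (2 ^ CARD('n) * (norm c)\<^sup>2) * (\<Sum>i\<in>UNIV. \<integral>\<^sup>+y. f y \<partial>qmeas \<Omega> (axis i 1))"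
  using assms by (intro nn_integral_le_sum_nn_integral emeasure_qmeas_le_diagonal) simp_all

lemma mm_integral_finite_iff_diagonal:
  assumes "f \<in> borel_measurable borel"
  shows "mm_integral_finite \<Omega> f \<longleftrightarrow> (\<forall>i. (\<integral>\<^sup>+y. f y \<partial>qmeas \<Omega> (axis i 1)) < \<infinity>)"
proof
  assume "\<forall>i. (\<integral>\<^sup>+y. f y \<partial>qmeas \<Omega> (axis i 1)) < \<infinity>"
  then have "ennreal (2 ^ CARD('n) * (norm c)\<^sup>2) * (\<Sum>i\<in>UNIV. \<integral>\<^sup>+y. f y \<partial>qmeas \<Omega> (axis i 1)) < \<infinity>"
    for c by (simp add: ennreal_mult_less_top)
  then show "mm_integral_finite \<Omega> f"
    unfolding mm_integral_finite_def using nn_integral_qmeas_le_diagonal[OF assms] le_less_trans by blast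
qed (simp add: mm_integral_finite_def)

lemma trace_matrix_measure_neq_0_iff:
  assumes "X \<in> sets borel" "bounded X"
  shows "trace (\<Omega> X) \<noteq> 0 \<longleftrightarrow> (\<exists>i. 0 < emeasure (qmeas \<Omega> (axis i 1)) X)"
proof -
  have trace: "trace (\<Omega> X) = of_real (\<Sum>i\<in>UNIV. qform (\<Omega> X) (axis i 1))"
    using assms by (intro psd_trace_eq_sum_qform matrix_measure_psd)
  have nonneg: "0 \<le> qform (\<Omega> X) (axis i 1)" for i
    using assms by (rule qform_matrix_measure_nonneg)
  have "trace (\<Omega> X) \<noteq> 0 \<longleftrightarrow> (\<Sum>i\<in>UNIV. qform (\<Omega> X) (axis i 1)) \<noteq> 0"
    by (simp only: trace of_real_eq_0_iff)
  also have "\<dots> \<longleftrightarrow> (\<exists>i. 0 < qform (\<Omega> X) (axis i 1))"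
    using nonneg by (simp add: sum_nonneg_eq_0_iff less_le)
  finally show ?thesis
    using assms by (simp add: emeasure_qmeas_bounded)
qed


lemma exists_support_point_Tkernel_eq_infinity:
  assumes "x \<in> mm_supp \<Omega>" "0 < e"
  shows "\<exists>y\<in>ball x e. y \<in> mm_supp \<Omega> \<and> (\<exists>i. (\<integral>\<^sup>+t. Tkernel y t \<partial>qmeas \<Omega> (axis i 1)) = \<infinity>)"
proof -
  have "trace (\<Omega> (ball x (e / 2))) \<noteq> 0"
    using assms by (simp add: mm_supp_def)
  then obtain i where "0 < emeasure (qmeas \<Omega> (axis i 1)) (ball x (e / 2))"
    using trace_matrix_measure_neq_0_iff by auto
  also have "\<dots> \<le> emeasure (qmeas \<Omega> (axis i 1)) {x - e / 2..x + e / 2}"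
    using ball_subset_cball[of x "e / 2"] by (intro emeasure_mono) (simp_all add: cball_eq_atLeastAtMost)
  finally have positive: "0 < emeasure (qmeas \<Omega> (axis i 1)) {x - e / 2..x + e / 2}" .
  have finite: "emeasure (qmeas \<Omega> (axis i 1)) {a..b} < \<infinity>" for a b
    by (simp add: emeasure_qmeas_bounded)
  obtain y where y: "y \<in> {x - e / 2..x + e / 2}"
    "\<forall>r>0. 0 < emeasure (qmeas \<Omega> (axis i 1)) (ball y r)"
    "(\<integral>\<^sup>+t. Tkernel y t \<partial>qmeas \<Omega> (axis i 1)) = \<infinity>"
    using exists_nn_integral_Tkernel_eq_infinity[OF sets_qmeas finite _ positive] \<open>0 < e\<close> by auto
  have "y \<in> mm_supp \<Omega>"
    using y(2) trace_matrix_measure_neq_0_iff by (auto simp: mm_supp_def)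
  moreover have "y \<in> ball x e"
    using y(1) \<open>0 < e\<close> by (auto simp: dist_real_def)
  ultimately show ?thesis
    using y(3) by blast
qed

end

theorem theorem3p9:
  fixes \<Omega> :: "real set \<Rightarrow> complex^'n^'n"
  assumes "matrix_measure \<Omega>"
    and "mm_integral_finite \<Omega> (\<lambda>y. ennreal (1 / (1 + y^2)))"
  defines "S \<equiv> {x \<in> mm_supp \<Omega>. \<not> mm_integral_finite \<Omega> (Tkernel x)}"
  shows "gdelta_in (top_of_set (mm_supp \<Omega>)) S
       \<and> (top_of_set (mm_supp \<Omega>)) closure_of S = mm_supp \<Omega>"
proof -
  define F where "F i x = (\<integral>\<^sup>+y. Tkernel x y \<partial>qmeas \<Omega> (axis i 1))" for i x
  have S_eq: "S = mm_supp \<Omega> \<inter> {x. \<exists>i. F i x = \<infinity>}"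
    unfolding S_def F_def by (auto simp: mm_integral_finite_iff_diagonal[OF assms(1)] less_top[symmetric])
  have "gdelta_in euclidean {x. \<exists>i. F i x = \<infinity>}"
    unfolding F_def using assms(1)
    by (intro gdelta_in_ex_eq_infinity open_nn_integral_gt continuous_on_Tkernel_left) simp
  then have "gdelta_in (top_of_set (mm_supp \<Omega>)) S"
    unfolding gdelta_in_subtopology S_eq by blast
  moreover have "mm_supp \<Omega> \<subseteq> closure S"
    using exists_support_point_Tkernel_eq_infinity[OF assms(1)]
    by (fastforce simp: closure_approachable S_eq F_def dist_commute)
  ultimately show ?thesis
    by (auto simp: closure_of_subtopology S_eq Int_absorb1)
qed

end
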